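(* Let $(\mathfrak{g},B_1,B_2)$ be a decomposable Rota-Baxter system of Lie algebras and $\phi=B_1+B_2$. Then every element $x\in\phi(\mathfrak{g})$ can be written uniquely as $x=u_++u_-$ with $(u_+,u_-)\in\tilde{\mathfrak{g}}$.
   Context: A Rota-Baxter system of Lie algebras is a triple $(\mathfrak{g},B_1,B_2)$ with $\mathfrak{g}$ a Lie algebra over a field and $B_1,B_2:\mathfrak{g}\to\mathfrak{g}$ linear maps such that for all $u,v\in\mathfrak{g}$: $[B_1(u),B_1(v)]=B_1([B_1(u),B_1(v)]-[B_2(u),B_2(v)])$ and $[B_2(v),B_2(u)]=B_2([B_1(u),B_1(v)]-[B_2(u),B_2(v)])$. It is decomposable if $\operatorname{Ker}(B_1+B_2)\subseteq\operatorname{Ker}(B_1)$. The subspaces $B_1(\operatorname{Ker}B_2)\subseteq B_1(\mathfrak{g})$ and $B_2(\operatorname{Ker}B_1)\subseteq B_2(\mathfrak{g})$ are ideals of these Lie subalgebras, and $\theta:B_1(\mathfrak{g})/B_1(\operatorname{Ker}B_2)\to B_2(\mathfrak{g})/B_2(\operatorname{Ker}B_1)$, $\theta(\overline{B_1(u)})=\overline{B_2(u)}$, is a well-defined linear map. Set $\tilde{\mathfrak{g}}=\{(u_+,u_-)\in B_1(\mathfrak{g})\oplus B_2(\mathfrak{g})\mid\theta(\overline{u_+})=\overline{u_-}\}$. *)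

theory Defs
  imports Complex_Main
begin

definition lie_algebra ::
  "('k::field \<Rightarrow> 'a::ab_group_add \<Rightarrow> 'a) \<Rightarrow> ('a \<Rightarrow> 'a \<Rightarrow> 'a) \<Rightarrow> bool" where
  "lie_algebra sc br \<longleftrightarrow>
     vector_space sc \<and>
     (\<forall>x. Vector_Spaces.linear sc sc (br x)) \<and>
     (\<forall>y. Vector_Spaces.linear sc sc (\<lambda>x. br x y)) \<and>
     (\<forall>x. br x x = 0) \<and>
     (\<forall>x y z. br x (br y z) + br y (br z x) + br z (br x y) = 0)"

definition rota_baxter_system ::
  "('k::field \<Rightarrow> 'a::ab_group_add \<Rightarrow> 'a) \<Rightarrow> ('a \<Rightarrow> 'a \<Rightarrow> 'a) \<Rightarrow> ('a \<Rightarrow> 'a) \<Rightarrow> ('a \<Rightarrow> 'a) \<Rightarrow> bool" where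
  "rota_baxter_system sc br B1 B2 \<longleftrightarrow>
     lie_algebra sc br \<and>
     Vector_Spaces.linear sc sc B1 \<and> Vector_Spaces.linear sc sc B2 \<and>
     (\<forall>u v. br (B1 u) (B1 v) = B1 (br (B1 u) (B1 v) - br (B2 u) (B2 v))) \<and>
     (\<forall>u v. br (B2 v) (B2 u) = B2 (br (B1 u) (B1 v) - br (B2 u) (B2 v)))"

definition decomposable :: "('a::ab_group_add \<Rightarrow> 'a) \<Rightarrow> ('a \<Rightarrow> 'a) \<Rightarrow> bool" where
  "decomposable B1 B2 \<longleftrightarrow> {u. B1 u + B2 u = 0} \<subseteq> {u. B1 u = 0}"

text \<open>The set g-tilde: pairs (a,b) in B1(g) x B2(g) with theta(class of a) = class of b,
  where classes are cosets modulo B1(Ker B2) resp. B2(Ker B1), and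
  theta(class of B1 u) = class of B2 u.\<close>
definition gtilde :: "('a::ab_group_add \<Rightarrow> 'a) \<Rightarrow> ('a \<Rightarrow> 'a) \<Rightarrow> ('a \<times> 'a) set" where
  "gtilde B1 B2 = {(a, b). a \<in> range B1 \<and> b \<in> range B2 \<and>
     (\<exists>u. a - B1 u \<in> B1 ` {v. B2 v = 0} \<and> b - B2 u \<in> B2 ` {v. B1 v = 0})}"

end

theory Submission
  imports Defs
begin

text \<open>Only additivity of B1 and B2 matters: then g-tilde is just the graph
  of u \<mapsto> (B1 u, B2 u), and decomposability says that B1 u + B2 u determines B1 u,
  hence also B2 u.\<close>

lemma rota_baxter_system_additive:
  assumes "rota_baxter_system sc br B1 B2"
  shows "additive B1" and "additive B2"
  using assms unfolding rota_baxter_system_def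
  by (auto intro!: additive.intro dest: Vector_Spaces.linear.axioms(3) module_hom.add)

lemma gtilde_eq_graph:
  assumes "additive B1" and "additive B2"
  shows "gtilde B1 B2 = range (\<lambda>u. (B1 u, B2 u))"
proof
  show "range (\<lambda>u. (B1 u, B2 u)) \<subseteq> gtilde B1 B2"
  proof clarify
    fix u
    have "0 \<in> B1 ` {v. B2 v = 0}" "0 \<in> B2 ` {v. B1 v = 0}"
      using additive.zero[OF assms(1)] additive.zero[OF assms(2)] by force+
    then show "(B1 u, B2 u) \<in> gtilde B1 B2"
      unfolding gtilde_def by (auto intro!: exI[of _ u])
  qed
next
  show "gtilde B1 B2 \<subseteq> range (\<lambda>u. (B1 u, B2 u))"
  proof
    fix p assume "p \<in> gtilde B1 B2"
    then obtain v k m where p: "p = (B1 k + B1 v, B2 m + B2 v)"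
      and k: "B2 k = 0" and m: "B1 m = 0"
      unfolding gtilde_def by (auto simp: diff_eq_eq)
    have "p = (B1 (v + k + m), B2 (v + k + m))"
      using p k m by (simp add: additive.add[OF assms(1)] additive.add[OF assms(2)])
    then show "p \<in> range (\<lambda>u. (B1 u, B2 u))" by blast
  qed
qed

lemma decomposable_sum_determines_B1:
  assumes "additive B1" and "additive B2" and "decomposable B1 B2"
    and "B1 u + B2 u = B1 w + B2 w"
  shows "B1 u = B1 w"
proof -
  have "B1 (u - w) + B2 (u - w) = 0"
    using assms(4) by (simp add: additive.diff[OF assms(1)] additive.diff[OF assms(2)] algebra_simps)
  then have "B1 (u - w) = 0"
    using assms(3) unfolding decomposable_def by auto
  then show ?thesis by (simp add: additive.diff[OF assms(1)])
qed

theorem theorem6p6: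
  fixes sc :: "'k::field \<Rightarrow> 'a::ab_group_add \<Rightarrow> 'a"
    and br :: "'a \<Rightarrow> 'a \<Rightarrow> 'a"
    and B1 B2 :: "'a \<Rightarrow> 'a"
  assumes "rota_baxter_system sc br B1 B2"
    and "decomposable B1 B2"
    and "x \<in> range (\<lambda>u. B1 u + B2 u)"
  shows "\<exists>!p. p \<in> gtilde B1 B2 \<and> x = fst p + snd p"
proof -
  note add1 = rota_baxter_system_additive(1)[OF assms(1)]
    and add2 = rota_baxter_system_additive(2)[OF assms(1)]
  obtain u where u: "x = B1 u + B2 u" using assms(3) by auto
  show ?thesis
  proof (rule ex1I[of _ "(B1 u, B2 u)"])
    show "(B1 u, B2 u) \<in> gtilde B1 B2 \<and> x = fst (B1 u, B2 u) + snd (B1 u, B2 u)"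
      using u by (simp add: gtilde_eq_graph[OF add1 add2])
  next
    fix p assume "p \<in> gtilde B1 B2 \<and> x = fst p + snd p"
    then obtain w where p: "p = (B1 w, B2 w)" and sum: "B1 w + B2 w = B1 u + B2 u"
      using u by (auto simp: gtilde_eq_graph[OF add1 add2])
    have "B1 w = B1 u"
      using decomposable_sum_determines_B1[OF add1 add2 assms(2) sum] .
    with p sum show "p = (B1 u, B2 u)" by simp
  qed
qed

end
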